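(* Let $f:\mathbb{R}^n\to\mathbb{R}$ be continuously differentiable, let $s$ be a positive integer, and let $D$ be a diagonal matrix with $D\succ 0$. A point $x\in C_s$ is $D$-stationary if and only if, for every $i\in\{1,\dots,n\}$, $$|\nabla_i f(x)| = 0 \text{ if } i\in I_1(x),\qquad |\nabla_i f(x)|\le D_{ii}^{1/2}\,M_s(D^{1/2}x)\text{ if } i\in I_0(x).$$
   Context: $C_s=\{x\in\mathbb{R}^n:\|x\|_0\le s\}$, where $\|x\|_0$ is the number of nonzero entries of $x$. For $z\in\mathbb{R}^n$, $\mathcal{P}_{C_s}(z)=\operatorname{argmin}_{y\in C_s}\|y-z\|_2^2$ is the (set-valued) projection onto $C_s$, i.e. the set of vectors obtained by keeping $s$ entries of $z$ of largest absolute value and zeroing the rest. A point $x\in C_s$ is called $D$-stationary if $x\in D^{-1/2}\mathcal{P}_{C_s}\big(D^{1/2}x-D^{-1/2}\nabla f(x)\big)$. $I_1(x)=\{i: x_i\neq 0\}$ and $I_0(x)=\{i:x_i=0\}$. $M_s(z)$ denotes the $s$-th largest absolute value among the entries of $z$. *)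

theory Defs
  imports "HOL-Analysis.Analysis" "HOL-Library.Multiset"
begin

definition l0 :: "real^'n \<Rightarrow> nat" where
  "l0 x = card {i. x $ i \<noteq> 0}"

definition Cs :: "nat \<Rightarrow> (real^'n) set" where
  "Cs s = {x. l0 x \<le> s}"

definition proj_Cs :: "nat \<Rightarrow> real^'n \<Rightarrow> (real^'n) set" where
  "proj_Cs s z = {y \<in> Cs s. \<forall>y'\<in>Cs s. (norm (y - z))\<^sup>2 \<le> (norm (y' - z))\<^sup>2}"

definition I1 :: "real^'n \<Rightarrow> 'n set" where "I1 x = {i. x $ i \<noteq> 0}"
definition I0 :: "real^'n \<Rightarrow> 'n set" where "I0 x = {i. x $ i = 0}"

text \<open>M_s(z): the s-th largest absolute value among the entries of z (counted with
  multiplicity); convention 0 if s exceeds the dimension (or s = 0).\<close>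
definition Ms :: "nat \<Rightarrow> real^'n \<Rightarrow> real" where
  "Ms s z = (let L = rev (sorted_list_of_multiset (image_mset (\<lambda>i. \<bar>z $ i\<bar>) (mset_set UNIV)))
             in if 1 \<le> s \<and> s \<le> length L then L ! (s - 1) else 0)"

definition diag_sqrt :: "real^'n^'n \<Rightarrow> real^'n^'n" where
  "diag_sqrt D = (\<chi> i j. if i = j then sqrt (D $ i $ i) else 0)"

text \<open>D-stationarity, where g is the gradient map of f:
  x \<in> C_s and x \<in> D^{-1/2} P_{C_s}(D^{1/2} x - D^{-1/2} \<nabla>f(x)).\<close>
definition D_stationary :: "nat \<Rightarrow> real^'n^'n \<Rightarrow> (real^'n \<Rightarrow> real^'n) \<Rightarrow> real^'n \<Rightarrow> bool" where
  "D_stationary s D g x \<longleftrightarrow> x \<in> Cs s \<and>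
     x \<in> (\<lambda>y. matrix_inv (diag_sqrt D) *v y) `
            proj_Cs s (diag_sqrt D *v x - matrix_inv (diag_sqrt D) *v g x)"

end

theory Submission
  imports Defs
begin

text \<open>With w = D^(1/2) x and z = D^(1/2) x - D^(-1/2) \<nabla>f(x), D-stationarity says that w is a
  best s-sparse approximation of z. The best s-sparse approximations of z are exactly its hard
  thresholdings: w agrees with z on its support, and every entry of z off the support has modulus
  at most M_s(w). Necessity is an exchange argument: otherwise correcting a coordinate, adding one
  to a non-full support, or swapping a smallest support entry for a larger entry of z stays in C_s
  and gets strictly closer to z. Sufficiency compares the discarded mass of z off the support of w
  with that off the support of any competitor: the two supports differ in equally many indices
  (or M_s(w) = 0), with z at most M_s(w) on one side and at least M_s(w) on the other. Unwinding
  the diagonal scaling coordinatewise gives the stated conditions on the gradient.\<close>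

lemma size_filter_mset_nth_rev_sorted:
  fixes M :: "'a::linorder multiset"
  defines "L \<equiv> rev (sorted_list_of_multiset M)"
  assumes "k < size M"
  shows "k < size (filter_mset (\<lambda>u. L ! k \<le> u) M)"
    and "size (filter_mset (\<lambda>u. L ! k < u) M) \<le> k"
proof -
  have len: "length L = size M"
    by (metis L_def length_rev mset_sorted_list_of_multiset size_mset)
  have sorted: "sorted_wrt (\<ge>) L"
    by (simp add: L_def sorted_wrt_rev)
  have size_filter: "size (filter_mset P M) = card {i. i < length L \<and> P (L ! i)}" for P
    by (metis L_def length_filter_conv_card mset_filter mset_rev mset_sorted_list_of_multiset size_mset)
  have antimono: "L ! j \<le> L ! i" if "i \<le> j" "j < length L" for i j
    using sorted that by (metis order.refl le_neq_implies_less sorted_wrt_nth_less)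
  have "{0..k} \<subseteq> {i. i < length L \<and> L ! k \<le> L ! i}"
    using antimono assms(2) len by auto
  from card_mono[OF _ this] show "k < size (filter_mset (\<lambda>u. L ! k \<le> u) M)"
    by (simp add: size_filter)
  have "{i. i < length L \<and> L ! k < L ! i} \<subseteq> {0..<k}"
    using antimono by (auto simp: not_le[symmetric])
  from card_mono[OF _ this] show "size (filter_mset (\<lambda>u. L ! k < u) M) \<le> k"
    by (simp add: size_filter)
qed

lemma length_sorted_list_of_abs_mset:
  "length (sorted_list_of_multiset (image_mset (\<lambda>i. \<bar>w $ i\<bar>) (mset_set UNIV))) = CARD('n)"
  for w :: "real^'n"
  by (metis mset_sorted_list_of_multiset size_image_mset size_mset size_mset_set)

lemma Ms_eq_nth:
  "Ms s w = (if 1 \<le> s \<and> s \<le> CARD('n)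
     then rev (sorted_list_of_multiset (image_mset (\<lambda>i. \<bar>w $ i\<bar>) (mset_set UNIV))) ! (s - 1)
     else 0)"
  for w :: "real^'n"
  by (simp add: Ms_def Let_def length_sorted_list_of_abs_mset)

lemma size_filter_mset_abs:
  "size (filter_mset P (image_mset (\<lambda>i. \<bar>w $ i\<bar>) (mset_set UNIV))) = card {i. P \<bar>w $ i\<bar>}"
  for w :: "real^'n"
  by (simp add: filter_mset_image_mset)

lemma Ms_nonneg: "0 \<le> Ms s w"
  for w :: "real^'n"
proof (cases "1 \<le> s \<and> s \<le> CARD('n)")
  case True
  let ?L = "rev (sorted_list_of_multiset (image_mset (\<lambda>i. \<bar>w $ i\<bar>) (mset_set UNIV)))"
  from True have "s - 1 < length ?L"
    unfolding length_rev length_sorted_list_of_abs_mset by linarith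
  then have "?L ! (s - 1) \<in> set ?L"
    by (rule nth_mem)
  with True show ?thesis
    by (auto simp: Ms_eq_nth)
qed (auto simp: Ms_eq_nth)

lemma card_abs_ge_Ms:
  fixes w :: "real^'n"
  assumes "0 < Ms s w"
  shows "s \<le> card {i. Ms s w \<le> \<bar>w $ i\<bar>}"
proof -
  from assms have s: "1 \<le> s" "s \<le> CARD('n)"
    by (metis Ms_eq_nth less_irrefl)+
  then have "s - 1 < size (image_mset (\<lambda>i. \<bar>w $ i\<bar>) (mset_set (UNIV :: 'n set)))"
    by simp
  from size_filter_mset_nth_rev_sorted(1)[OF this] show ?thesis
    using s by (simp add: Ms_eq_nth size_filter_mset_abs)
qed

lemma card_abs_gt_Ms:
  fixes w :: "real^'n"
  assumes "1 \<le> s"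
  shows "card {i. Ms s w < \<bar>w $ i\<bar>} < s"
proof (cases "s \<le> CARD('n)")
  case True
  with assms have "s - 1 < size (image_mset (\<lambda>i. \<bar>w $ i\<bar>) (mset_set (UNIV :: 'n set)))"
    by simp
  from size_filter_mset_nth_rev_sorted(2)[OF this] show ?thesis
    using assms True by (simp add: Ms_eq_nth size_filter_mset_abs)
next
  case False
  then show ?thesis
    using card_mono[of UNIV "{i. Ms s w < \<bar>w $ i\<bar>}"] by simp
qed

lemma mem_Cs_iff: "x \<in> Cs s \<longleftrightarrow> card (I1 x) \<le> s"
  by (simp add: Cs_def l0_def I1_def)

lemma Ms_eq_0_if_card_I1_less:
  assumes "card (I1 w) < s"
  shows "Ms s w = 0"
proof (rule ccontr)
  assume "Ms s w \<noteq> 0"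
  with Ms_nonneg have pos: "0 < Ms s w"
    by (metis less_eq_real_def)
  have "s \<le> card {i. Ms s w \<le> \<bar>w $ i\<bar>}"
    by (rule card_abs_ge_Ms[OF pos])
  also have "\<dots> \<le> card (I1 w)"
    using pos by (intro card_mono) (auto simp: I1_def)
  finally show False
    using assms by simp
qed

lemma Ms_le_abs_if_card_I1_le:
  assumes "card (I1 w) \<le> s" "i \<in> I1 w"
  shows "Ms s w \<le> \<bar>w $ i\<bar>"
proof (rule ccontr)
  assume less: "\<not> Ms s w \<le> \<bar>w $ i\<bar>"
  then have pos: "0 < Ms s w"
    by linarith
  have "s \<le> card {k. Ms s w \<le> \<bar>w $ k\<bar>}"
    by (rule card_abs_ge_Ms[OF pos])
  also have "\<dots> \<le> card (I1 w - {i})"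
    using pos less by (intro card_mono) (auto simp: I1_def)
  also have "\<dots> < card (I1 w)"
    using assms(2) by (intro card_Diff1_less) auto
  finally show False
    using assms(1) by simp
qed

lemma ex_abs_le_Ms_if_card_I1_eq:
  fixes w :: "real^'n"
  assumes "1 \<le> s" "card (I1 w) = s"
  shows "\<exists>j\<in>I1 w. \<bar>w $ j\<bar> \<le> Ms s w"
proof (rule ccontr)
  assume "\<not> ?thesis"
  then have "I1 w \<subseteq> {i. Ms s w < \<bar>w $ i\<bar>}"
    by auto
  then have "card (I1 w) \<le> card {i. Ms s w < \<bar>w $ i\<bar>}"
    by (intro card_mono) auto
  with card_abs_gt_Ms[OF assms(1), where w = w] assms(2) show False
    by simp
qed

definition diag_mat :: "('n \<Rightarrow> 'a::zero) \<Rightarrow> 'a^'n^'n" where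
  "diag_mat d = (\<chi> i j. if i = j then d i else 0)"

lemma diag_mat_mult_vec: "diag_mat d *v v = (\<chi> i. d i * v $ i)"
  by (simp add: vec_eq_iff diag_mat_def matrix_vector_mult_def if_distrib[where f="\<lambda>a. a * _"]
      cong: if_cong)

lemma diag_mat_mult: "diag_mat d ** diag_mat e = diag_mat (\<lambda>i. d i * e i)"
  by (simp add: vec_eq_iff diag_mat_def matrix_matrix_mult_def if_distrib[where f="\<lambda>a. a * _"]
      cong: if_cong)

lemma diag_mat_one: "diag_mat (\<lambda>_. 1) = mat 1"
  by (simp add: diag_mat_def mat_def)

lemma matrix_inv_eqI:
  fixes A B :: "'a::semiring_1^'n^'n"
  assumes "A ** B = mat 1" "B ** A = mat 1"
  shows "matrix_inv A = B"
proof -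
  have inv: "A ** matrix_inv A = mat 1 \<and> matrix_inv A ** A = mat 1"
    unfolding matrix_inv_def by (rule someI[of _ B]) (use assms in simp)
  have "matrix_inv A = matrix_inv A ** (A ** B)"
    by (simp add: assms(1) matrix_mul_rid)
  also have "\<dots> = B"
    by (simp add: inv matrix_mul_assoc matrix_mul_lid)
  finally show ?thesis .
qed

lemma matrix_inv_diag_mat:
  fixes d :: "'n::finite \<Rightarrow> 'a::field"
  assumes "\<And>i. d i \<noteq> 0"
  shows "matrix_inv (diag_mat d) = diag_mat (\<lambda>i. inverse (d i))"
  by (rule matrix_inv_eqI) (simp_all add: diag_mat_mult assms flip: diag_mat_one)

lemma diag_sqrt_eq_diag_mat: "diag_sqrt D = diag_mat (\<lambda>i. sqrt (D $ i $ i))"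
  by (simp add: diag_sqrt_def diag_mat_def)

lemma mem_image_inverse_mult_vec_iff:
  fixes A B :: "'a::comm_semiring_1^'n^'n"
  assumes "A ** B = mat 1" "B ** A = mat 1"
  shows "x \<in> (\<lambda>y. B *v y) ` P \<longleftrightarrow> A *v x \<in> P"
proof
  assume "x \<in> (\<lambda>y. B *v y) ` P"
  then obtain y where "y \<in> P" "x = B *v y"
    by blast
  then show "A *v x \<in> P"
    by (simp add: matrix_vector_mul_assoc assms(1))
next
  assume "A *v x \<in> P"
  moreover have "x = B *v (A *v x)"
    by (simp add: matrix_vector_mul_assoc assms(2))
  ultimately show "x \<in> (\<lambda>y. B *v y) ` P"
    by blast
qed

lemma D_stationary_iff_proj_Cs:
  assumes "\<And>i. D $ i $ i > 0"
  shows "D_stationary s D g x \<longleftrightarrow> x \<in> Cs s \<and>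
    diag_sqrt D *v x \<in> proj_Cs s (\<chi> i. sqrt (D $ i $ i) * x $ i - g x $ i / sqrt (D $ i $ i))"
proof -
  have nz: "sqrt (D $ i $ i) \<noteq> 0" for i
    using assms[of i] by simp
  let ?R = "diag_mat (\<lambda>i. sqrt (D $ i $ i))" and ?Ri = "diag_mat (\<lambda>i. inverse (sqrt (D $ i $ i)))"
  have "?R ** ?Ri = mat 1" "?Ri ** ?R = mat 1"
    using nz by (simp_all add: diag_mat_mult flip: diag_mat_one)
  moreover have "diag_sqrt D *v x - matrix_inv (diag_sqrt D) *v g x
      = (\<chi> i. sqrt (D $ i $ i) * x $ i - g x $ i / sqrt (D $ i $ i))"
    by (simp add: vec_eq_iff diag_sqrt_eq_diag_mat matrix_inv_diag_mat[OF nz] diag_mat_mult_vec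
        divide_inverse mult.commute)
  ultimately show ?thesis
    unfolding D_stationary_def diag_sqrt_eq_diag_mat matrix_inv_diag_mat[OF nz]
    by (simp add: mem_image_inverse_mult_vec_iff)
qed

lemma power2_norm_vec: "(norm v)\<^sup>2 = (\<Sum>i\<in>UNIV. (v $ i)\<^sup>2)"
  for v :: "real^'n"
  unfolding power2_norm_eq_inner inner_vec_def by (simp add: power2_eq_square)

lemma proj_Cs_iff_sum:
  "w \<in> proj_Cs s z \<longleftrightarrow> w \<in> Cs s \<and>
     (\<forall>y\<in>Cs s. (\<Sum>i\<in>UNIV. (w $ i - z $ i)\<^sup>2) \<le> (\<Sum>i\<in>UNIV. (y $ i - z $ i)\<^sup>2))"
  by (simp add: proj_Cs_def power2_norm_vec)

lemma proj_Cs_correct_coord_notin_Cs: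
  assumes "w \<in> proj_Cs s z" "w $ i \<noteq> z $ i"
  shows "(\<chi> k. if k = i then z $ i else w $ k) \<notin> Cs s"
proof
  let ?y = "\<chi> k. if k = i then z $ i else w $ k"
  assume "?y \<in> Cs s"
  with assms(1) have "(\<Sum>k\<in>UNIV. (w $ k - z $ k)\<^sup>2) \<le> (\<Sum>k\<in>UNIV. (?y $ k - z $ k)\<^sup>2)"
    unfolding proj_Cs_iff_sum by blast
  moreover have "(\<Sum>k\<in>UNIV. (?y $ k - z $ k)\<^sup>2) < (\<Sum>k\<in>UNIV. (w $ k - z $ k)\<^sup>2)"
    by (rule sum_strict_mono_ex1) (use assms(2) in auto)
  ultimately show False
    by simp
qed

lemma proj_Cs_eq_on_I1:
  assumes "w \<in> proj_Cs s z" "i \<in> I1 w"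
  shows "w $ i = z $ i"
proof (rule ccontr)
  let ?y = "\<chi> k. if k = i then z $ i else w $ k"
  assume "w $ i \<noteq> z $ i"
  with assms(1) have "?y \<notin> Cs s"
    by (rule proj_Cs_correct_coord_notin_Cs)
  moreover have "card (I1 ?y) \<le> card (I1 w)"
    using assms(2) by (intro card_mono) (auto simp: I1_def)
  ultimately show False
    using assms(1) by (simp add: proj_Cs_def mem_Cs_iff)
qed

lemma proj_Cs_abs_le_Ms:
  fixes w z :: "real^'n"
  assumes "1 \<le> s" "w \<in> proj_Cs s z" "i \<in> I0 w"
  shows "\<bar>z $ i\<bar> \<le> Ms s w"
proof (rule ccontr)
  assume "\<not> \<bar>z $ i\<bar> \<le> Ms s w"
  then have gt: "Ms s w < \<bar>z $ i\<bar>"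
    by simp
  have wi: "w $ i = 0"
    using assms(3) by (simp add: I0_def)
  have "card (I1 w) \<le> s"
    using assms(2) by (simp add: proj_Cs_def mem_Cs_iff)
  then consider "card (I1 w) < s" | "card (I1 w) = s"
    by linarith
  then show False
  proof cases
    case 1
    let ?y = "\<chi> k. if k = i then z $ i else w $ k"
    have "z $ i \<noteq> 0"
      using gt Ms_nonneg[of s w] by auto
    with assms(2) wi have "?y \<notin> Cs s"
      by (intro proj_Cs_correct_coord_notin_Cs) auto
    moreover have "card (I1 ?y) \<le> card (insert i (I1 w))"
      by (intro card_mono) (auto simp: I1_def)
    ultimately show False
      using 1 by (simp add: mem_Cs_iff card_insert_if split: if_splits)
  next
    case 2
    txt \<open>Swap i into the support in place of an entry j with |w j| \<le> Ms s w < |z i|.\<close>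
    obtain j where j: "j \<in> I1 w" "\<bar>w $ j\<bar> \<le> Ms s w"
      using ex_abs_le_Ms_if_card_I1_eq[OF assms(1) 2] by blast
    have ij: "i \<noteq> j" and wj: "w $ j = z $ j"
      using j wi proj_Cs_eq_on_I1[OF assms(2) j(1)] by (auto simp: I1_def)
    define y where "y = (\<chi> k. if k = i then z $ i else if k = j then 0 else w $ k)"
    have "card (I1 y) \<le> card (insert i (I1 w - {j}))"
      by (intro card_mono) (auto simp: I1_def y_def)
    also have "\<dots> \<le> Suc (card (I1 w - {j}))"
      by (simp add: card_insert_if)
    also have "\<dots> = s"
      using j(1) 2 assms(1) by simp
    finally have "y \<in> Cs s"
      by (simp add: mem_Cs_iff)
    define h where "h k = (y $ k - z $ k)\<^sup>2 - (w $ k - z $ k)\<^sup>2" for k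
    have "(\<Sum>k\<in>UNIV. h k) = h i + h j"
      using ij by (subst sum.mono_neutral_right[of UNIV "{i, j}"]) (auto simp: h_def y_def)
    also have "\<dots> = (w $ j)\<^sup>2 - (z $ i)\<^sup>2"
      using ij wi wj by (simp add: h_def y_def)
    also have "\<dots> < 0"
      using j(2) gt by (metis abs_le_square_iff not_le order.strict_trans1 diff_less_0_iff_less)
    finally have "(\<Sum>k\<in>UNIV. (y $ k - z $ k)\<^sup>2) < (\<Sum>k\<in>UNIV. (w $ k - z $ k)\<^sup>2)"
      by (simp add: h_def sum_subtractf)
    with \<open>y \<in> Cs s\<close> assms(2) show False
      by (auto simp: proj_Cs_iff_sum)
  qed
qed

lemma sum_I0_le_norm: "(\<Sum>i\<in>I0 y. (z $ i)\<^sup>2) \<le> (norm (y - z))\<^sup>2"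
  for y z :: "real^'n"
proof -
  have "(\<Sum>i\<in>I0 y. (z $ i)\<^sup>2) = (\<Sum>i\<in>I0 y. (y $ i - z $ i)\<^sup>2)"
    by (rule sum.cong) (auto simp: I0_def)
  also have "\<dots> \<le> (\<Sum>i\<in>UNIV. (y $ i - z $ i)\<^sup>2)"
    by (rule sum_mono2) auto
  finally show ?thesis
    by (simp add: power2_norm_vec)
qed

lemma norm_eq_sum_I0:
  fixes w z :: "real^'n"
  assumes "\<forall>i\<in>I1 w. w $ i = z $ i"
  shows "(norm (w - z))\<^sup>2 = (\<Sum>i\<in>I0 w. (z $ i)\<^sup>2)"
proof -
  have "(\<Sum>i\<in>I0 w. (z $ i)\<^sup>2) = (\<Sum>i\<in>I0 w. (w $ i - z $ i)\<^sup>2)"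
    by (rule sum.cong) (auto simp: I0_def)
  also have "\<dots> = (\<Sum>i\<in>UNIV. (w $ i - z $ i)\<^sup>2)"
    using assms by (intro sum.mono_neutral_left) (auto simp: I0_def I1_def)
  finally show ?thesis
    by (simp add: power2_norm_vec)
qed

lemma thresholded_imp_proj_Cs:
  fixes w z :: "real^'n"
  assumes "w \<in> Cs s" "\<forall>i\<in>I1 w. w $ i = z $ i" "\<forall>i\<in>I0 w. \<bar>z $ i\<bar> \<le> Ms s w"
  shows "w \<in> proj_Cs s z"
  unfolding proj_Cs_def
proof (intro CollectI conjI ballI assms(1))
  fix y :: "real^'n"
  assume "y \<in> Cs s"
  define f where "f i = (z $ i)\<^sup>2" for i
  let ?M = "Ms s w" and ?S = "I1 w" and ?T = "I1 y"
  have "sum f (?T - ?S) \<le> card (?T - ?S) * ?M\<^sup>2"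
    using assms(3) Ms_nonneg[of s w]
    by (intro sum_bounded_above) (auto simp: f_def I0_def I1_def abs_le_square_iff[symmetric])
  also have "\<dots> \<le> card (?S - ?T) * ?M\<^sup>2"
  proof (cases "?M = 0")
    case False
    txt \<open>A nonzero threshold forces a full support, so the competitor support ?T cannot be larger.\<close>
    then have "\<not> card ?S < s"
      using Ms_eq_0_if_card_I1_less by blast
    then have "card ?S = s"
      using assms(1) by (simp add: mem_Cs_iff)
    moreover have "card ?T \<le> s"
      using \<open>y \<in> Cs s\<close> by (simp add: mem_Cs_iff)
    ultimately have "card (?T - ?S) \<le> card (?S - ?T)"
      using card_Int_Diff[of ?T ?S] card_Int_Diff[of ?S ?T] by (simp add: Int_commute)
    then show ?thesis
      by (intro mult_right_mono) auto
  qed simp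
  also have "\<dots> \<le> sum f (?S - ?T)"
  proof (intro sum_bounded_below)
    fix i assume i: "i \<in> ?S - ?T"
    then have "?M \<le> \<bar>w $ i\<bar>"
      using Ms_le_abs_if_card_I1_le[of w s i] assms(1) by (simp add: mem_Cs_iff)
    moreover have "w $ i = z $ i"
      using i assms(2) by simp
    ultimately show "?M\<^sup>2 \<le> f i"
      using Ms_nonneg[of s w] by (simp add: f_def abs_le_square_iff[symmetric])
  qed
  finally have exchange: "sum f (?T - ?S) \<le> sum f (?S - ?T)" .
  have "I0 w - I0 y = ?T - ?S" "I0 y - I0 w = ?S - ?T"
    by (auto simp: I0_def I1_def)
  then have "sum f (I0 w) \<le> sum f (I0 y)"
    using exchange sum.Int_Diff[of "I0 w" f "I0 y"] sum.Int_Diff[of "I0 y" f "I0 w"]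
    by (simp add: Int_commute)
  then show "(norm (w - z))\<^sup>2 \<le> (norm (y - z))\<^sup>2"
    using sum_I0_le_norm[where y = y and z = z] norm_eq_sum_I0[OF assms(2)] by (simp add: f_def)
qed

lemma proj_Cs_iff_thresholded:
  fixes w z :: "real^'n"
  assumes "1 \<le> s" "w \<in> Cs s"
  shows "w \<in> proj_Cs s z \<longleftrightarrow> (\<forall>i\<in>I1 w. w $ i = z $ i) \<and> (\<forall>i\<in>I0 w. \<bar>z $ i\<bar> \<le> Ms s w)"
  using proj_Cs_eq_on_I1 proj_Cs_abs_le_Ms[OF assms(1)] thresholded_imp_proj_Cs[OF assms(2)] by blast

lemma thresholded_rescaled_iff:
  fixes x b :: "real^'n" and r :: "'n \<Rightarrow> real"
  assumes "\<And>i. r i > 0"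
  defines "w \<equiv> \<chi> i. r i * x $ i" and "z \<equiv> \<chi> i. r i * x $ i - b $ i / r i"
  shows "(\<forall>i\<in>I1 x. w $ i = z $ i) \<and> (\<forall>i\<in>I0 x. \<bar>z $ i\<bar> \<le> M) \<longleftrightarrow>
    (\<forall>i. (i \<in> I1 x \<longrightarrow> \<bar>b $ i\<bar> = 0) \<and> (i \<in> I0 x \<longrightarrow> \<bar>b $ i\<bar> \<le> r i * M))"
proof -
  have "w $ i = z $ i \<longleftrightarrow> b $ i = 0" for i
    using assms(1)[of i] by (simp add: w_def z_def)
  moreover have "\<bar>z $ i\<bar> \<le> M \<longleftrightarrow> \<bar>b $ i\<bar> \<le> r i * M" if "i \<in> I0 x" for i
  proof -
    have "\<bar>z $ i\<bar> = \<bar>b $ i\<bar> / r i"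
      using that assms(1)[of i] by (simp add: z_def I0_def)
    then show ?thesis
      using assms(1)[of i] by (metis pos_divide_le_eq mult.commute)
  qed
  ultimately show ?thesis
    unfolding Ball_def by (metis abs_0_eq)
qed

theorem lemma4p2:
  fixes f :: "real^'n \<Rightarrow> real" and g :: "real^'n \<Rightarrow> real^'n"
    and D :: "real^'n^'n" and s :: nat and x :: "real^'n"
  assumes grad: "\<forall>y. (f has_derivative (\<lambda>h. g y \<bullet> h)) (at y)"
    and cont: "continuous_on UNIV g"
    and spos: "s \<ge> 1"
    and Ddiag: "\<forall>i j. i \<noteq> j \<longrightarrow> D $ i $ j = 0"
    and Dpos: "\<forall>i. D $ i $ i > 0"
    and xCs: "x \<in> Cs s"
  shows "D_stationary s D g x \<longleftrightarrow>
           (\<forall>i. (i \<in> I1 x \<longrightarrow> \<bar>g x $ i\<bar> = 0) \<and>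
                (i \<in> I0 x \<longrightarrow> \<bar>g x $ i\<bar> \<le> sqrt (D $ i $ i) * Ms s (diag_sqrt D *v x)))"
proof -
  define r where "r i = sqrt (D $ i $ i)" for i
  have r_pos: "r i > 0" for i
    using Dpos by (simp add: r_def)
  define w where "w = diag_sqrt D *v x"
  have w_eq: "w = (\<chi> i. r i * x $ i)"
    by (simp add: w_def r_def diag_sqrt_eq_diag_mat diag_mat_mult_vec)
  have I1_w: "I1 w = I1 x" and I0_w: "I0 w = I0 x"
    using r_pos by (simp_all add: I1_def I0_def w_eq less_imp_neq[symmetric])
  have "w \<in> Cs s"
    using xCs by (simp add: mem_Cs_iff I1_w)
  define z :: "real^'n" where "z = (\<chi> i. r i * x $ i - g x $ i / r i)"
  have "D_stationary s D g x \<longleftrightarrow> w \<in> proj_Cs s z"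
    using D_stationary_iff_proj_Cs[of D s g x] Dpos xCs by (simp add: w_def z_def r_def)
  also have "\<dots> \<longleftrightarrow> (\<forall>i\<in>I1 x. w $ i = z $ i) \<and> (\<forall>i\<in>I0 x. \<bar>z $ i\<bar> \<le> Ms s w)"
    using proj_Cs_iff_thresholded[OF spos \<open>w \<in> Cs s\<close>] unfolding I1_w I0_w .
  also have "\<dots> \<longleftrightarrow> (\<forall>i. (i \<in> I1 x \<longrightarrow> \<bar>g x $ i\<bar> = 0) \<and>
      (i \<in> I0 x \<longrightarrow> \<bar>g x $ i\<bar> \<le> r i * Ms s w))"
    unfolding w_eq z_def by (rule thresholded_rescaled_iff) (rule r_pos)
  finally show ?thesis
    by (simp add: w_def r_def)
qed

end
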